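(* If $q$ is an odd prime power then $f(X):=X^{q+2}+bX^q+cX$ does not permute $\mathbb{F}_{q^2}$ for any $b,c\in\mathbb{F}_{q^2}$ with $b\ne 0$. *)

theory Defs
  imports "HOL-Computational_Algebra.Primes"
begin

end

theory Submission
  imports Defs "HOL-Computational_Algebra.Polynomial" "HOL-Number_Theory.Residues"
begin

(* If f(X) = X^(q+2) + b X^q + c X permuted GF(q^2), the power sum of f(x)^(q-1) over the field
   would equal that of x^(q-1), which vanishes since 0 < q-1 < q^2-1 (Hermite).  On the other hand,
   writing f(x) = x^q (x^2 + b) + c x and expanding binomially, f(x)^(q-1) is a combination of the
   monomials x^((q-1)(m+1)+2i) with 0 <= i <= m <= q-1.  These exponents lie strictly between 0 and
   2(q^2-1), so only the one equal to q^2-1, namely m = q-1 and i = (q-1)/2, survives summation,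
   leaving -binom(q-1,(q-1)/2) b^((q-1)/2).  In characteristic p, binom(q-1,j) = (-1)^j, so this is
   nonzero when b is. *)

lemma power_card_minus_one_eq_one:
  fixes x :: "'a::{field,finite}"
  assumes "x \<noteq> 0"
  shows "x ^ (card (UNIV :: 'a set) - 1) = 1"
proof -
  let ?U = "UNIV - {0::'a}"
  have "x ^ card ?U * (\<Prod>y\<in>?U. y) = (\<Prod>y\<in>?U. x * y)"
    by (simp add: prod.distrib)
  also have "\<dots> = (\<Prod>y\<in>?U. y)"
    by (rule prod.reindex_bij_witness[of _ "\<lambda>y. y / x" "\<lambda>y. x * y"]) (use assms in auto)
  finally have "x ^ card ?U = 1"
    by simp
  then show ?thesis
    by (simp add: card_Diff_singleton)
qed

lemma of_nat_card_eq_0: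
  "of_nat (card (UNIV :: 'a::{field,finite} set)) = (0::'a)"
  by (simp add: of_nat_eq_0_iff_char_dvd CHAR_dvd_CARD)

lemma card_roots_of_unity_le:
  assumes "0 < r"
  shows "card {x::'a::idom. x ^ r = 1} \<le> r"
proof -
  let ?P = "Polynomial.monom (1::'a) r + [:-1:]"
  have "degree ?P = r"
    using assms by (simp add: degree_add_eq_left degree_monom_eq)
  then have "?P \<noteq> 0"
    using assms by auto
  with \<open>degree ?P = r\<close> show ?thesis
    using card_poly_roots_bound[of ?P] by (simp add: poly_monom)
qed

lemma sum_power_finite_field:
  fixes e :: nat
  assumes "0 < e"
  shows "(\<Sum>x\<in>UNIV. x ^ e) = (if (card (UNIV :: 'a set) - 1) dvd e then -1 else (0::'a::{field,finite}))"
proof (cases "(card (UNIV :: 'a set) - 1) dvd e")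
  case True
  have "x ^ e = 1" if "x \<noteq> 0" for x :: 'a
    using True power_card_minus_one_eq_one[OF that] by (auto simp: power_mult)
  have "(\<Sum>x\<in>UNIV. x ^ e) = 0 ^ e + (\<Sum>x\<in>UNIV - {0::'a}. x ^ e)"
    by (simp add: sum.remove)
  also have "\<dots> = (\<Sum>x\<in>UNIV - {0::'a}. 1)"
    using assms by (simp add: \<open>\<And>x. x \<noteq> 0 \<Longrightarrow> x ^ e = 1\<close>)
  also have "\<dots> = of_nat (card (UNIV :: 'a set)) - 1"
    using finite_UNIV_card_ge_0[where 'a='a] by (simp add: card_Diff_singleton)
  finally show ?thesis
    using True by (simp add: of_nat_card_eq_0)
next
  case False
  define N1 where "N1 = card (UNIV :: 'a set) - 1"
  define r where "r = e mod N1"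
  have "0 < r"
    unfolding r_def N1_def mod_greater_zero_iff_not_dvd using False .
  have "2 \<le> card (UNIV :: 'a set)"
    using card_mono[of UNIV "{0::'a, 1}"] by simp
  then have "r < card (UNIV - {0::'a})"
    by (simp add: r_def N1_def card_Diff_singleton)
  have "\<not> UNIV - {0} \<subseteq> {x::'a. x ^ r = 1}"
  proof
    assume "UNIV - {0} \<subseteq> {x::'a. x ^ r = 1}"
    then have "card (UNIV - {0::'a}) \<le> card {x::'a. x ^ r = 1}"
      by (intro card_mono) simp_all
    with \<open>r < card (UNIV - {0::'a})\<close> card_roots_of_unity_le[OF \<open>0 < r\<close>, where 'a='a]
    show False
      by linarith
  qed
  then obtain a :: 'a where a: "a \<noteq> 0" "a ^ r \<noteq> 1"
    by blast
  have "a ^ e = a ^ (N1 * (e div N1) + r)"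
    by (simp add: r_def)
  also have "\<dots> = (a ^ N1) ^ (e div N1) * a ^ r"
    by (simp only: power_add power_mult)
  finally have "a ^ e \<noteq> 1"
    using a power_card_minus_one_eq_one[OF a(1)] by (simp add: N1_def)
  have "(\<Sum>x\<in>UNIV. x ^ e) = (\<Sum>x\<in>UNIV. (a * x) ^ e)"
    by (rule sum.reindex_bij_witness[of _ "\<lambda>y. a * y" "\<lambda>y. y / a"]) (use a in auto)
  also have "\<dots> = a ^ e * (\<Sum>x\<in>UNIV. x ^ e)"
    by (simp add: power_mult_distrib sum_distrib_left)
  finally show ?thesis
    using False \<open>a ^ e \<noteq> 1\<close> by (simp add: algebra_simps)
qed

lemma sum_power_bij_eq_0:
  fixes f :: "'a::{field,finite} \<Rightarrow> 'a"
  assumes "bij f" "0 < e" "e < card (UNIV :: 'a set) - 1"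
  shows "(\<Sum>x\<in>UNIV. f x ^ e) = 0"
proof -
  have "(\<Sum>x\<in>UNIV. f x ^ e) = (\<Sum>x\<in>UNIV. x ^ e)"
    using sum.reindex_bij_betw[OF assms(1), of "\<lambda>y. y ^ e"] by simp
  also have "\<dots> = 0"
    using sum_power_finite_field[OF assms(2), where 'a='a] assms(2,3) by (auto dest: dvd_imp_le)
  finally show ?thesis .
qed

lemma prime_power_dvd_choose:
  fixes p k j :: nat
  assumes "prime p" "0 < j" "j < p ^ k"
  shows "p dvd (p ^ k choose j)"
proof (rule ccontr)
  assume "\<not> p dvd (p ^ k choose j)"
  then have "coprime (p ^ k) (p ^ k choose j)"
    using assms(1) by (simp add: prime_imp_coprime)
  moreover have "j * (p ^ k choose j) = p ^ k * (p ^ k - 1 choose (j - 1))"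
    using assms(2,3) by (metis Suc_pred' Suc_times_binomial gr_zeroI not_less_zero)
  ultimately have "p ^ k dvd j"
    by (metis coprime_dvd_mult_left_iff dvd_triv_left)
  then show False
    using assms(2,3) by (simp add: nat_dvd_not_less)
qed

lemma of_nat_choose_prime_power_minus_one:
  fixes p k m :: nat
  assumes "prime p" "of_nat p = (0::'a::comm_ring_1)" "m < p ^ k"
  shows "of_nat (p ^ k - 1 choose m) = ((-1) ^ m :: 'a)"
  using assms(3)
proof (induction m)
  case (Suc m)
  have "p dvd (p ^ k choose Suc m)"
    using assms(1) Suc.prems by (intro prime_power_dvd_choose) auto
  then obtain t where "p ^ k choose Suc m = p * t" ..
  then have "of_nat (p ^ k choose Suc m) = (0::'a)"
    using assms(2) by simp
  moreover have "p ^ k choose Suc m = (p ^ k - 1 choose m) + (p ^ k - 1 choose Suc m)"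
    using Suc.prems by (metis Suc_diff_1 binomial_Suc_Suc gr_zeroI not_less_zero)
  ultimately show ?case
    using Suc by (simp add: eq_neg_iff_add_eq_0 add.commute)
qed simp

lemma dvd_less_double_imp_eq:
  fixes a b :: nat
  assumes "b dvd a" "0 < a" "a < 2 * b"
  shows "a = b"
  using assms by (elim dvdE) (auto simp: less_2_cases_iff)

lemma dvd_exponent_iff:
  fixes n m i :: nat
  assumes "i \<le> m" "m \<le> n" "0 < n"
  shows "n * (n + 2) dvd n * (m + 1) + 2 * i \<longleftrightarrow> m = n \<and> 2 * i = n"
proof -
  let ?M = "n * (n + 2)" and ?E = "n * (m + 1) + 2 * i"
  have "n * m \<le> n * n"
    using assms(2) by simp
  moreover have "?E = n * m + n + 2 * i"
    by (simp add: algebra_simps)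
  ultimately have "?E \<le> n * n + 3 * n"
    using assms(1,2) by linarith
  then have "0 < ?E" "?E < 2 * ?M"
    using assms(3) by (auto simp: algebra_simps)
  then have "?M dvd ?E \<longleftrightarrow> ?E = ?M"
    using dvd_less_double_imp_eq[of ?M ?E] by (metis dvd_refl)
  also have "\<dots> \<longleftrightarrow> m = n \<and> 2 * i = n"
  proof
    assume "?E = ?M"
    show "m = n \<and> 2 * i = n"
    proof (cases "m = n")
      case False
      then have "m + 1 \<le> n"
        using assms(2) by simp
      then have "n * (m + 1) \<le> n * n"
        by (rule mult_le_mono2)
      then show ?thesis
        using \<open>?E = ?M\<close> \<open>m + 1 \<le> n\<close> assms(1) by (simp add: algebra_simps)
    qed (use \<open>?E = ?M\<close> in \<open>simp add: algebra_simps\<close>)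
  qed (simp add: algebra_simps)
  finally show ?thesis .
qed

lemma power_trinomial_expansion:
  fixes b c x :: "'a::comm_ring_1" and n :: nat
  shows "(x ^ (n + 3) + b * x ^ (n + 1) + c * x) ^ n =
    (\<Sum>m\<le>n. \<Sum>i\<le>m. of_nat (n choose m) * of_nat (m choose i) * b ^ (m - i) * c ^ (n - m)
                       * x ^ (n * (m + 1) + 2 * i))"
proof -
  have "x ^ (n + 3) + b * x ^ (n + 1) + c * x = x ^ (n + 1) * (x ^ 2 + b) + c * x"
    by (simp add: algebra_simps power_add power2_eq_square numeral_3_eq_3)
  then have "(x ^ (n + 3) + b * x ^ (n + 1) + c * x) ^ n =
      (\<Sum>m\<le>n. of_nat (n choose m) * (x ^ (n + 1) * (x ^ 2 + b)) ^ m * (c * x) ^ (n - m))"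
    by (simp add: binomial_ring)
  also have "\<dots> = (\<Sum>m\<le>n. \<Sum>i\<le>m. of_nat (n choose m) * of_nat (m choose i) * b ^ (m - i)
                  * c ^ (n - m) * x ^ (n * (m + 1) + 2 * i))"
  proof (intro sum.cong refl)
    fix m assume "m \<in> {..n}"
    then have "n * (m + 1) + 2 * i = (n + 1) * m + 2 * i + (n - m)" for i
      by (simp add: algebra_simps)
    then have "x ^ (n * (m + 1) + 2 * i) = (x ^ (n + 1)) ^ m * (x ^ 2) ^ i * x ^ (n - m)" for i
      by (simp only: power_add power_mult)
    then show "of_nat (n choose m) * (x ^ (n + 1) * (x ^ 2 + b)) ^ m * (c * x) ^ (n - m) =
        (\<Sum>i\<le>m. of_nat (n choose m) * of_nat (m choose i) * b ^ (m - i) * c ^ (n - m)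
                 * x ^ (n * (m + 1) + 2 * i))"
      by (simp add: binomial_ring[of "x ^ 2" b] power_mult_distrib sum_distrib_left mult_ac)
  qed
  finally show ?thesis .
qed

lemma sum_power_trinomial:
  fixes b c :: "'a::{field,finite}" and n :: nat
  assumes "card (UNIV :: 'a set) = (n + 1) ^ 2" "0 < n" "even n"
  shows "(\<Sum>x\<in>UNIV. (x ^ (n + 3) + b * x ^ (n + 1) + c * x) ^ n)
           = - of_nat (n choose (n div 2)) * b ^ (n div 2)"
proof -
  define T :: "nat \<Rightarrow> nat \<Rightarrow> 'a" where
    "T m i = of_nat (n choose m) * of_nat (m choose i) * b ^ (m - i) * c ^ (n - m)" for m i
  have card: "card (UNIV :: 'a set) - 1 = n * (n + 2)"
    using assms(1) by (simp add: power2_eq_square algebra_simps)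
  have power_sum: "(\<Sum>x::'a\<in>UNIV. x ^ (n * (m + 1) + 2 * i)) = (if m = n \<and> i = n div 2 then -1 else 0)"
    if "i \<le> m" "m \<le> n" for m i
  proof -
    have "0 < n * (m + 1) + 2 * i"
      using assms(2) by simp
    then have "(\<Sum>x\<in>UNIV. x ^ (n * (m + 1) + 2 * i))
        = (if n * (n + 2) dvd n * (m + 1) + 2 * i then -1 else (0::'a))"
      unfolding card[symmetric] by (rule sum_power_finite_field)
    also have "2 * i = n \<longleftrightarrow> i = n div 2"
      using assms(3) by auto
    then have "(if n * (n + 2) dvd n * (m + 1) + 2 * i then -1 else (0::'a))
        = (if m = n \<and> i = n div 2 then -1 else 0)"
      by (simp only: dvd_exponent_iff[OF that assms(2)])
    finally show ?thesis .
  qed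
  have "(\<Sum>x\<in>UNIV. (x ^ (n + 3) + b * x ^ (n + 1) + c * x) ^ n)
      = (\<Sum>x\<in>UNIV. \<Sum>m\<le>n. \<Sum>i\<le>m. T m i * x ^ (n * (m + 1) + 2 * i))"
    by (simp only: power_trinomial_expansion T_def)
  also have "\<dots> = (\<Sum>m\<le>n. \<Sum>i\<le>m. T m i * (\<Sum>x\<in>UNIV. x ^ (n * (m + 1) + 2 * i)))"
    by (simp add: sum_distrib_left sum.swap[of _ UNIV])
  also have "\<dots> = (\<Sum>m\<le>n. \<Sum>i\<le>m. if m = n \<and> i = n div 2 then - T m i else 0)"
  proof (intro sum.cong refl)
    fix m i assume "m \<in> {..n}" "i \<in> {..m}"
    then show "T m i * (\<Sum>x\<in>UNIV. x ^ (n * (m + 1) + 2 * i))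
        = (if m = n \<and> i = n div 2 then - T m i else 0)"
      using power_sum[of i m] by simp
  qed
  also have "\<dots> = (\<Sum>m\<le>n. if m = n then - T n (n div 2) else 0)"
    by (intro sum.cong refl) (auto simp: sum.delta)
  also have "\<dots> = - of_nat (n choose (n div 2)) * b ^ (n div 2)"
    using assms(3) by (auto simp: T_def elim: evenE)
  finally show ?thesis .
qed

theorem lemma2p5:
  fixes b c :: "'a::{field,finite}" and p k q :: nat
  assumes "prime p" and "k \<ge> 1" and "q = p ^ k" and "odd q"
    and "card (UNIV :: 'a set) = q ^ 2"
    and "b \<noteq> 0"
  shows "\<not> bij (\<lambda>x::'a. x ^ (q + 2) + b * x ^ q + c * x)"
proof
  assume perm: "bij (\<lambda>x::'a. x ^ (q + 2) + b * x ^ q + c * x)"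
  define n where "n = q - 1"
  have "p \<le> q"
    unfolding assms(3) using prime_gt_0_nat[OF assms(1)] assms(2) by (intro self_le_power) auto
  then have q: "q = n + 1" and "0 < n" and "even n"
    using assms(1,4) prime_ge_2_nat[of p] by (auto simp: n_def)
  have "n < card (UNIV :: 'a set) - 1"
    using \<open>0 < n\<close> by (simp add: assms(5) q power2_eq_square)
  then have "(\<Sum>x\<in>UNIV. (x ^ (q + 2) + b * x ^ q + c * x) ^ n) = 0"
    using sum_power_bij_eq_0[OF perm \<open>0 < n\<close>] by simp
  then have central_term: "of_nat (n choose (n div 2)) * b ^ (n div 2) = (0::'a)"
    using sum_power_trinomial[OF _ \<open>0 < n\<close> \<open>even n\<close>, of b c] assms(5)
    by (simp add: q numeral_3_eq_3)
  have "of_nat p = (0::'a)"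
    using of_nat_card_eq_0[where 'a='a] assms(2,3,5) by (simp flip: power_mult)
  moreover have "n div 2 < p ^ k"
    using q assms(3) by simp
  ultimately have "of_nat (n choose (n div 2)) = ((-1) ^ (n div 2) :: 'a)"
    unfolding n_def assms(3) by (rule of_nat_choose_prime_power_minus_one[OF assms(1)])
  with central_term show False
    using assms(6) by simp
qed

end
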